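(* Let $f$ be a nonnegative integer-valued function on $V(G)$. Every graph $G$ that is $t$-iso-tough for $t(v)=f(v)(f(v)+1)$ has an $(f,f+1)$-factor.
   Context: Graphs are finite, have no loops, but may have multiple edges; degrees count multiplicities. For $S\subseteq V(G)$, $G\setminus S$ is the graph obtained by deleting $S$ and $I(G\setminus S)$ is its set of isolated vertices. For a real function $t$ on $V(G)$, $G$ is $t$-iso-tough if $\sum_{v\in I(G\setminus S)}t(v)\le |S|$ for all $S\subseteq V(G)$. An $(f,f+1)$-factor is a spanning subgraph $F$ with $f(v)\le d_F(v)\le f(v)+1$ for all $v$. *)

theory Defs
  imports Complex_Main
begin

text \<open>A finite loopless multigraph on the vertex set V is given by an edge-multiplicity
  function m :: 'a => 'a => nat, where m u v is the number of edges joining u and v.\<close>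

definition multigraph :: "'a set \<Rightarrow> ('a \<Rightarrow> 'a \<Rightarrow> nat) \<Rightarrow> bool" where
  "multigraph V m \<longleftrightarrow> finite V \<and> (\<forall>u v. m u v = m v u) \<and> (\<forall>v. m v v = 0)
     \<and> (\<forall>u v. m u v \<noteq> 0 \<longrightarrow> u \<in> V \<and> v \<in> V)"

definition mdegree :: "'a set \<Rightarrow> ('a \<Rightarrow> 'a \<Rightarrow> nat) \<Rightarrow> 'a \<Rightarrow> nat" where
  "mdegree V m v = (\<Sum>u\<in>V. m v u)"

definition iso_vertices :: "'a set \<Rightarrow> ('a \<Rightarrow> 'a \<Rightarrow> nat) \<Rightarrow> 'a set \<Rightarrow> 'a set" where
  "iso_vertices V m S = {v \<in> V - S. \<forall>u\<in>V - S. m v u = 0}"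

definition iso_tough :: "'a set \<Rightarrow> ('a \<Rightarrow> 'a \<Rightarrow> nat) \<Rightarrow> ('a \<Rightarrow> real) \<Rightarrow> bool" where
  "iso_tough V m t \<longleftrightarrow>
     (\<forall>S\<subseteq>V. (\<Sum>v\<in>iso_vertices V m S. t v) \<le> real (card S))"

definition spanning_subgraph :: "'a set \<Rightarrow> ('a \<Rightarrow> 'a \<Rightarrow> nat) \<Rightarrow> ('a \<Rightarrow> 'a \<Rightarrow> nat) \<Rightarrow> bool" where
  "spanning_subgraph V m F \<longleftrightarrow> multigraph V F \<and> (\<forall>u v. F u v \<le> m u v)"

definition ff1_factor :: "'a set \<Rightarrow> ('a \<Rightarrow> 'a \<Rightarrow> nat) \<Rightarrow> ('a \<Rightarrow> nat) \<Rightarrow> ('a \<Rightarrow> 'a \<Rightarrow> nat) \<Rightarrow> bool" where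
  "ff1_factor V m f F \<longleftrightarrow> spanning_subgraph V m F \<and>
     (\<forall>v\<in>V. f v \<le> mdegree V F v \<and> mdegree V F v \<le> f v + 1)"

end

theory Submission
  imports Defs
begin

text \<open>Among the spanning subgraphs F with all degrees at most f + 1 choose one of minimum total
  deficiency, the sum of the deficits max(0, f v - d_F v). If some vertex x is still deficient,
  look at the alternating trails from x whose first edge is not in F. Switching F along such a
  trail would lower the deficiency, so a trail whose last edge is not in F ends at a vertex w with
  d_F w > f w, and a trail whose last edge is in F ends at a vertex u with d_F u <= f u. The two
  sets S and T of such ends (x counted in T) form a barrier: every edge from T to V - S lies in F
  and every F-edge at S goes to T. Counting the F-edges between S and T gives
  1 + sum_S (f w + 1) <= sum_T (f u - d_(G-S) u). A greedy choice of a vertex of largest f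
  together with its neighbours finds an independent set I in T with d_(G-S) u < f u on I whose
  sum of (f u)^2 dominates the right-hand side. Removing S and the neighbours of I isolates I, so
  iso-toughness gives sum_I f u (f u + 1) <= |S| + sum_I d_(G-S) u, which contradicts the two
  previous inequalities.\<close>

section \<open>Alternating trails\<close>

text \<open>A step (p, q, c) traverses an edge from p to q; c tells whether the edge belongs to F.
  Trails may repeat vertices and edges; how often each parallel edge may be used is controlled
  by fits.\<close>

inductive alt_trail :: "'a \<Rightarrow> ('a \<times> 'a \<times> bool) list \<Rightarrow> 'a \<Rightarrow> bool \<Rightarrow> bool" where
  first: "alt_trail x [(x, y, False)] y False"
| extend: "alt_trail x st y c \<Longrightarrow> alt_trail x (st @ [(y, z, \<not> c)]) z (\<not> c)"

lemma alt_trail_last: "alt_trail x st y c \<Longrightarrow> \<exists>p. st \<noteq> [] \<and> last st = (p, y, c)"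
  by (induction rule: alt_trail.induct) auto

lemma alt_trail_take:
  "alt_trail x st y c \<Longrightarrow> k < length st \<Longrightarrow> st ! k = (p, q, b) \<Longrightarrow>
    alt_trail x (take (Suc k) st) q b"
proof (induction arbitrary: k rule: alt_trail.induct)
  case (first x y)
  then show ?case by (auto intro: alt_trail.first)
next
  case (extend x st y c z)
  show ?case
  proof (cases "k < length st")
    case True
    with extend show ?thesis by (simp add: nth_append)
  next
    case False
    with extend.prems have "k = length st" by simp
    with extend show ?thesis by (auto intro: alt_trail.extend)
  qed
qed

definition uses :: "('a \<times> 'a \<times> bool) list \<Rightarrow> bool \<Rightarrow> 'a \<Rightarrow> 'a \<Rightarrow> nat" where
  "uses st b u w = length (filter (\<lambda>(p, q, c). c = b \<and> {p, q} = {u, w}) st)"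

lemma uses_commute: "uses st b u w = uses st b w u"
  by (simp add: uses_def insert_commute)

lemma uses_append: "uses (st @ st') b u w = uses st b u w + uses st' b u w"
  by (simp add: uses_def)

lemma uses_take_le: "uses (take n st) b u w \<le> uses st b u w"
  using uses_append[of "take n st" "drop n st" b u w] by simp

lemma uses_pos_nth:
  assumes "0 < uses st b u w"
  shows "\<exists>k<length st. st ! k = (u, w, b) \<or> st ! k = (w, u, b)"
proof -
  have "filter (\<lambda>(p, q, c). c = b \<and> {p, q} = {u, w}) st \<noteq> []"
    using assms unfolding uses_def by (intro notI) simp
  then obtain s where "s \<in> set st" "(\<lambda>(p, q, c). c = b \<and> {p, q} = {u, w}) s"
    unfolding filter_empty_conv by blast
  then have "s = (u, w, b) \<or> s = (w, u, b)"
    by (cases s) (auto simp: doubleton_eq_iff)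
  with \<open>s \<in> set st\<close> show ?thesis
    by (metis in_set_conv_nth)
qed

lemma uses_pos_if_mem: "(p, q, c) \<in> set st \<Longrightarrow> 0 < uses st c p q"
proof -
  assume "(p, q, c) \<in> set st"
  then have "(p, q, c) \<in> set (filter (\<lambda>(p', q', c'). c' = c \<and> {p', q'} = {p, q}) st)"
    by simp
  then show ?thesis unfolding uses_def by (rule length_pos_if_in_set)
qed

lemma uses_singleton: "uses [(u, w, b)] b' u' w' = of_bool (b = b' \<and> {u, w} = {u', w'})"
  by (simp add: uses_def)

definition capacity :: "('a \<Rightarrow> 'a \<Rightarrow> nat) \<Rightarrow> ('a \<Rightarrow> 'a \<Rightarrow> nat) \<Rightarrow> bool \<Rightarrow> 'a \<Rightarrow> 'a \<Rightarrow> nat" where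
  "capacity m F b u w = (if b then F u w else m u w - F u w)"

definition fits :: "('a \<Rightarrow> 'a \<Rightarrow> nat) \<Rightarrow> ('a \<Rightarrow> 'a \<Rightarrow> nat) \<Rightarrow> ('a \<times> 'a \<times> bool) list \<Rightarrow> bool" where
  "fits m F st \<longleftrightarrow> (\<forall>b u w. uses st b u w \<le> capacity m F b u w)"

lemma capacity_commute:
  "\<forall>u v. m u v = m v u \<Longrightarrow> \<forall>u v. F u v = F v u \<Longrightarrow> capacity m F b u w = capacity m F b w u"
  by (simp add: capacity_def)

lemma fits_uses_le:
  assumes "fits m F st"
  shows "uses st True u w \<le> F u w" "uses st False u w \<le> m u w - F u w"
  using assms unfolding fits_def capacity_def by (metis (full_types))+

lemma fits_take: "fits m F st \<Longrightarrow> fits m F (take n st)"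
  unfolding fits_def by (meson uses_take_le order_trans)

lemma fits_snoc:
  assumes fits: "fits m F st" and free: "uses st b u w < capacity m F b u w"
    and symm: "\<forall>u v. m u v = m v u" "\<forall>u v. F u v = F v u"
  shows "fits m F (st @ [(u, w, b)])"
  unfolding fits_def
proof (intro allI)
  fix b' u' w'
  show "uses (st @ [(u, w, b)]) b' u' w' \<le> capacity m F b' u' w'"
  proof (cases "b = b' \<and> {u, w} = {u', w'}")
    case True
    then have "uses st b' u' w' = uses st b u w \<and> capacity m F b' u' w' = capacity m F b u w"
      using uses_commute capacity_commute[OF symm] by (auto simp: doubleton_eq_iff)
    with True free show ?thesis by (simp add: uses_append uses_singleton)
  next
    case False
    then have "uses [(u, w, b)] b' u' w' = 0"
      by (simp add: uses_singleton)
    with fits show ?thesis unfolding fits_def by (simp add: uses_append)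
  qed
qed

lemma fits_step_in_graph:
  assumes "fits m F st" "multigraph V m" "\<forall>u v. F u v \<le> m u v" "(p, q, c) \<in> set st"
  shows "p \<noteq> q \<and> p \<in> V \<and> q \<in> V"
proof -
  have "0 < capacity m F c p q"
    using uses_pos_if_mem[OF assms(4)] assms(1) unfolding fits_def by (meson order_less_le_trans)
  then have "m p q \<noteq> 0"
    using assms(3)[rule_format, of p q] by (cases c) (auto simp: capacity_def)
  with assms(2) show ?thesis unfolding multigraph_def by metis
qed

section \<open>Switching along a trail\<close>

definition degree_change :: "'a \<Rightarrow> ('a \<times> 'a \<times> bool) list \<Rightarrow> int" where
  "degree_change v st = (\<Sum>(p, q, c)\<leftarrow>st. (of_bool (v = p) + of_bool (v = q)) * (if c then -1 else 1))"

lemma alt_trail_degree_change: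
  "alt_trail x st y c \<Longrightarrow>
    degree_change v st = of_bool (v = x) + (if v = y then (if c then -1 else 1) else 0)"
  by (induction rule: alt_trail.induct) (auto simp: degree_change_def)

definition switch :: "('a \<Rightarrow> 'a \<Rightarrow> nat) \<Rightarrow> ('a \<times> 'a \<times> bool) list \<Rightarrow> 'a \<Rightarrow> 'a \<Rightarrow> nat" where
  "switch F st u w = F u w + uses st False u w - uses st True u w"

lemma switch_spanning_subgraph:
  assumes "multigraph V m" "spanning_subgraph V m F" "fits m F st"
  shows "spanning_subgraph V m (switch F st)"
proof -
  have m: "finite V" "\<forall>u v. m u v = m v u" "\<forall>v. m v v = 0" "\<forall>u v. m u v \<noteq> 0 \<longrightarrow> u \<in> V \<and> v \<in> V"
    using assms(1) unfolding multigraph_def by auto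
  have F: "\<forall>u v. F u v = F v u" "\<forall>u v. F u v \<le> m u v"
    using assms(2) unfolding spanning_subgraph_def multigraph_def by auto
  have le: "switch F st u v \<le> m u v" for u v
  proof -
    have "F u v + uses st False u v \<le> m u v"
      using fits_uses_le(2)[OF assms(3), of u v] F(2) by (simp add: le_diff_conv2)
    then show ?thesis unfolding switch_def by linarith
  qed
  have "switch F st u v = switch F st v u" for u v
    unfolding switch_def using F(1) uses_commute by metis
  moreover have "switch F st v v = 0" for v
    using le[of v v] m(3) by simp
  moreover have "switch F st u v \<noteq> 0 \<longrightarrow> u \<in> V \<and> v \<in> V" for u v
    using le[of u v] m(4) by (metis le_zero_eq)
  ultimately show ?thesis
    using m(1) le unfolding spanning_subgraph_def multigraph_def by blast
qed

lemma sum_of_bool_doubleton: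
  assumes "finite V" "p \<noteq> q" "p \<in> V" "q \<in> V"
  shows "(\<Sum>u\<in>V. of_bool ({p, q} = {v, u}) :: int) = of_bool (v = p) + of_bool (v = q)"
proof -
  have "of_bool ({p, q} = {v, u}) = (if u = q then of_bool (v = p) else 0) + (if u = p then of_bool (v = q) else 0 :: int)"
    for u using assms(2) by (auto simp: doubleton_eq_iff)
  then show ?thesis using assms by (simp add: sum.distrib)
qed

lemma sum_uses_eq_degree_change:
  assumes "finite V" "\<forall>(p, q, c)\<in>set st. p \<noteq> q \<and> p \<in> V \<and> q \<in> V"
  shows "(\<Sum>u\<in>V. int (uses st False v u) - int (uses st True v u)) = degree_change v st"
  using assms(2)
proof (induction st)
  case Nil
  then show ?case by (simp add: uses_def degree_change_def)
next
  case (Cons s st)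
  obtain p q c where s: "s = (p, q, c)" by (cases s)
  have "(\<Sum>u\<in>V. int (uses (s # st) False v u) - int (uses (s # st) True v u))
      = (\<Sum>u\<in>V. int (uses [s] False v u) - int (uses [s] True v u))
        + (\<Sum>u\<in>V. int (uses st False v u) - int (uses st True v u))"
    using uses_append[of "[s]" st] by (simp add: sum.distrib[symmetric] algebra_simps)
  also have "(\<Sum>u\<in>V. int (uses [s] False v u) - int (uses [s] True v u))
      = (\<Sum>u\<in>V. of_bool ({p, q} = {v, u})) * (if c then -1 else 1)"
    unfolding sum_distrib_right by (rule sum.cong) (auto simp: s uses_singleton)
  also have "\<dots> = (of_bool (v = p) + of_bool (v = q)) * (if c then -1 else 1)"
    using Cons.prems s sum_of_bool_doubleton[OF assms(1)] by simp
  also have "(\<Sum>u\<in>V. int (uses st False v u) - int (uses st True v u)) = degree_change v st"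
    using Cons by simp
  finally show ?case
    by (simp add: s degree_change_def)
qed

lemma switch_mdegree:
  assumes "multigraph V m" "spanning_subgraph V m F" "fits m F st"
  shows "int (mdegree V (switch F st) v) = int (mdegree V F v) + degree_change v st"
proof -
  have fin: "finite V" using assms(1) unfolding multigraph_def by simp
  have le: "\<forall>u v. F u v \<le> m u v" using assms(2) unfolding spanning_subgraph_def by simp
  have steps: "\<forall>(p, q, c)\<in>set st. p \<noteq> q \<and> p \<in> V \<and> q \<in> V"
    using fits_step_in_graph[OF assms(3,1) le] by blast
  have "int (mdegree V (switch F st) v)
      = (\<Sum>u\<in>V. int (F v u) + (int (uses st False v u) - int (uses st True v u)))"
    unfolding mdegree_def switch_def of_nat_sum
    by (rule sum.cong) (simp_all add: of_nat_diff fits_uses_le(1)[OF assms(3)] trans_le_add1)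
  also have "\<dots> = int (mdegree V F v) + degree_change v st"
    using sum_uses_eq_degree_change[OF fin steps]
    by (simp add: sum.distrib mdegree_def of_nat_sum)
  finally show ?thesis .
qed

section \<open>Deficiency-minimal subgraphs\<close>

definition degree_bounded_subgraph ::
    "'a set \<Rightarrow> ('a \<Rightarrow> 'a \<Rightarrow> nat) \<Rightarrow> ('a \<Rightarrow> nat) \<Rightarrow> ('a \<Rightarrow> 'a \<Rightarrow> nat) \<Rightarrow> bool" where
  "degree_bounded_subgraph V m f F \<longleftrightarrow>
     spanning_subgraph V m F \<and> (\<forall>v\<in>V. mdegree V F v \<le> f v + 1)"

text \<open>Only the deficits count: the subtraction is truncated.\<close>

definition deficiency :: "'a set \<Rightarrow> ('a \<Rightarrow> nat) \<Rightarrow> ('a \<Rightarrow> 'a \<Rightarrow> nat) \<Rightarrow> nat" where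
  "deficiency V f F = (\<Sum>v\<in>V. f v - mdegree V F v)"

definition min_deficiency_subgraph ::
    "'a set \<Rightarrow> ('a \<Rightarrow> 'a \<Rightarrow> nat) \<Rightarrow> ('a \<Rightarrow> nat) \<Rightarrow> ('a \<Rightarrow> 'a \<Rightarrow> nat) \<Rightarrow> bool" where
  "min_deficiency_subgraph V m f F \<longleftrightarrow> degree_bounded_subgraph V m f F \<and>
     (\<forall>F'. degree_bounded_subgraph V m f F' \<longrightarrow> deficiency V f F \<le> deficiency V f F')"

lemma ex_min_deficiency_subgraph:
  assumes "multigraph V m"
  shows "\<exists>F. min_deficiency_subgraph V m f F"
proof -
  have "degree_bounded_subgraph V m f (\<lambda>_ _. 0)"
    using assms unfolding degree_bounded_subgraph_def spanning_subgraph_def multigraph_def mdegree_def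
    by auto
  then show ?thesis
    unfolding min_deficiency_subgraph_def by (rule ex_has_least_nat[where m = "deficiency V f"])
qed

lemma ff1_factor_if_deficiency_zero:
  assumes "finite V" "degree_bounded_subgraph V m f F" "deficiency V f F = 0"
  shows "ff1_factor V m f F"
  using assms unfolding ff1_factor_def degree_bounded_subgraph_def deficiency_def by simp

lemma deficiency_less:
  assumes "finite V" "x \<in> V" "mdegree V F x < f x" "mdegree V F x < mdegree V F' x"
    and "\<forall>v\<in>V. mdegree V F v \<le> mdegree V F' v \<or> f v \<le> mdegree V F' v"
  shows "deficiency V f F' < deficiency V f F"
  unfolding deficiency_def
proof (rule sum_strict_mono_ex1[OF assms(1)])
  show "\<forall>v\<in>V. f v - mdegree V F' v \<le> f v - mdegree V F v"
    using assms(5) by auto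
  show "\<exists>v\<in>V. f v - mdegree V F' v < f v - mdegree V F v"
    using assms(2-4) by force
qed

lemma min_deficiency_alt_trail_end:
  assumes mg: "multigraph V m" and min: "min_deficiency_subgraph V m f F"
    and x: "x \<in> V" "mdegree V F x < f x" and trail: "alt_trail x st y c" "fits m F st"
  shows "y \<in> V \<and> (if c then mdegree V F y \<le> f y else f y + 1 \<le> mdegree V F y)"
proof -
  have sp: "spanning_subgraph V m F" "\<forall>v\<in>V. mdegree V F v \<le> f v + 1"
    using min unfolding min_deficiency_subgraph_def degree_bounded_subgraph_def by auto
  obtain p where "(p, y, c) \<in> set st"
    using alt_trail_last[OF trail(1)] by (metis last_in_set)
  then have "y \<in> V"
    using fits_step_in_graph[OF trail(2) mg] sp(1) unfolding spanning_subgraph_def by blast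
  moreover have "if c then mdegree V F y \<le> f y else f y + 1 \<le> mdegree V F y"
  proof (rule ccontr)
    assume blocked: "\<not> ?thesis"
    let ?F' = "switch F st"
    have deg: "int (mdegree V ?F' v) = int (mdegree V F v) + of_bool (v = x)
        + (if v = y then (if c then -1 else 1) else 0)" for v
      using switch_mdegree[OF mg sp(1) trail(2)] alt_trail_degree_change[OF trail(1)] by simp
    have "y \<noteq> x \<or> \<not> c" using blocked x(2) by auto
    then have "mdegree V ?F' v \<le> f v + 1" if "v \<in> V" for v
      using deg[of v] sp(2) that blocked x(2) by (cases c; cases "v = x"; cases "v = y") auto
    then have "degree_bounded_subgraph V m f ?F'"
      using switch_spanning_subgraph[OF mg sp(1) trail(2)]
      unfolding degree_bounded_subgraph_def by blast
    moreover have "deficiency V f ?F' < deficiency V f F"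
    proof (rule deficiency_less)
      show "finite V" using mg unfolding multigraph_def by simp
      show "mdegree V F x < mdegree V ?F' x"
        using deg[of x] \<open>y \<noteq> x \<or> \<not> c\<close> by (auto split: if_splits)
      show "\<forall>v\<in>V. mdegree V F v \<le> mdegree V ?F' v \<or> f v \<le> mdegree V ?F' v"
      proof
        fix v
        show "mdegree V F v \<le> mdegree V ?F' v \<or> f v \<le> mdegree V ?F' v"
          using deg[of v] blocked by (cases c; cases "v = x"; cases "v = y") auto
      qed
    qed (use x in auto)
    ultimately show False using min unfolding min_deficiency_subgraph_def by auto
  qed
  ultimately show ?thesis ..
qed

section \<open>The barrier at a deficient vertex\<close>

definition alt_reach :: "('a \<Rightarrow> 'a \<Rightarrow> nat) \<Rightarrow> ('a \<Rightarrow> 'a \<Rightarrow> nat) \<Rightarrow> 'a \<Rightarrow> bool \<Rightarrow> 'a set" where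
  "alt_reach m F x c = {y. \<exists>st. alt_trail x st y c \<and> fits m F st}"

lemma alt_reach_first:
  assumes "\<forall>u v. m u v = m v u" "\<forall>u v. F u v = F v u" "0 < capacity m F False x w"
  shows "w \<in> alt_reach m F x False"
proof -
  have "fits m F ([] @ [(x, w, False)])"
    using assms by (intro fits_snoc) (auto simp: fits_def uses_def)
  then show ?thesis
    unfolding alt_reach_def by (auto intro: alt_trail.first)
qed

lemma alt_reach_extend:
  assumes symm: "\<forall>u v. m u v = m v u" "\<forall>u v. F u v = F v u"
    and "u \<in> alt_reach m F x c" "0 < capacity m F (\<not> c) u w"
  shows "w \<in> alt_reach m F x (\<not> c) \<or> u \<in> alt_reach m F x (\<not> c)"
proof -
  obtain st where trail: "alt_trail x st u c" and fits: "fits m F st"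
    using assms(3) unfolding alt_reach_def by blast
  show ?thesis
  proof (cases "uses st (\<not> c) u w < capacity m F (\<not> c) u w")
    case True
    then have "fits m F (st @ [(u, w, \<not> c)])"
      using fits_snoc[OF fits _ symm] by blast
    with alt_trail.extend[OF trail] show ?thesis
      unfolding alt_reach_def by blast
  next
    case False
    \<comment> \<open>the edge is used up by st itself, so a prefix of st already ends with it\<close>
    with assms(4) obtain k where k: "k < length st" "st ! k = (u, w, \<not> c) \<or> st ! k = (w, u, \<not> c)"
      using uses_pos_nth[of st "\<not> c" u w] by fastforce
    have "fits m F (take (Suc k) st)"
      using fits_take[OF fits] .
    with k alt_trail_take[OF trail k(1)] show ?thesis
      unfolding alt_reach_def by blast
  qed
qed

definition alternating_barrier :: "'a set \<Rightarrow> ('a \<Rightarrow> 'a \<Rightarrow> nat) \<Rightarrow> ('a \<Rightarrow> nat) \<Rightarrow> ('a \<Rightarrow> 'a \<Rightarrow> nat)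
    \<Rightarrow> 'a set \<Rightarrow> 'a set \<Rightarrow> bool" where
  "alternating_barrier V m f F S T \<longleftrightarrow> S \<subseteq> V \<and> T \<subseteq> V \<and> S \<inter> T = {} \<and>
     (\<forall>w\<in>S. f w + 1 \<le> mdegree V F w) \<and> (\<forall>u\<in>T. mdegree V F u \<le> f u) \<and>
     (\<exists>x\<in>T. mdegree V F x < f x) \<and>
     (\<forall>u\<in>T. \<forall>w. F u w < m u w \<longrightarrow> w \<in> S) \<and> (\<forall>w\<in>S. \<forall>z. 0 < F w z \<longrightarrow> z \<in> T)"

lemma min_deficiency_alternating_barrier:
  assumes mg: "multigraph V m" and min: "min_deficiency_subgraph V m f F"
    and x: "x \<in> V" "mdegree V F x < f x"
  shows "alternating_barrier V m f F (alt_reach m F x False) (insert x (alt_reach m F x True))"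
proof -
  define S where "S = alt_reach m F x False"
  define T where "T = insert x (alt_reach m F x True)"
  have symm: "\<forall>u v. m u v = m v u" "\<forall>u v. F u v = F v u"
    using mg min unfolding min_deficiency_subgraph_def degree_bounded_subgraph_def
      spanning_subgraph_def multigraph_def by auto
  have S: "w \<in> V \<and> f w + 1 \<le> mdegree V F w" if "w \<in> S" for w
    using that min_deficiency_alt_trail_end[OF mg min x] unfolding S_def alt_reach_def by fastforce
  have T: "u \<in> V \<and> mdegree V F u \<le> f u" if "u \<in> T" for u
    using that min_deficiency_alt_trail_end[OF mg min x] x unfolding T_def alt_reach_def by fastforce
  have disjoint: "S \<inter> T = {}"
    using S T by fastforce
  have "w \<in> S" if "u \<in> T" "F u w < m u w" for u w
  proof -
    have cap: "0 < capacity m F False u w" using that(2) by (simp add: capacity_def)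
    show ?thesis
    proof (cases "u = x")
      case True
      with alt_reach_first[OF symm cap] show ?thesis unfolding S_def by simp
    next
      case False
      from cap have "0 < capacity m F (\<not> True) u w" by simp
      with False that(1) alt_reach_extend[OF symm, of u x True w] have "w \<in> S \<or> u \<in> S"
        unfolding S_def T_def by simp
      with that(1) disjoint show ?thesis by blast
    qed
  qed
  moreover have "z \<in> T" if "w \<in> S" "0 < F w z" for w z
  proof -
    have cap: "0 < capacity m F (\<not> False) w z" using that(2) by (simp add: capacity_def)
    from that(1) alt_reach_extend[OF symm _ cap, of x] have "z \<in> T \<or> w \<in> T"
      unfolding S_def T_def by auto
    with that(1) disjoint show ?thesis by blast
  qed
  ultimately have "alternating_barrier V m f F S T"
    using S T x disjoint unfolding alternating_barrier_def T_def by blast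
  then show ?thesis unfolding S_def T_def .
qed

section \<open>Counting against iso-toughness\<close>

definition independent_set :: "('a \<Rightarrow> 'a \<Rightarrow> nat) \<Rightarrow> 'a set \<Rightarrow> bool" where
  "independent_set m I \<longleftrightarrow> (\<forall>u\<in>I. \<forall>w\<in>I. m u w = 0)"

lemma card_neighbours_le_mdegree: "finite A \<Longrightarrow> card {w\<in>A. 0 < m u w} \<le> mdegree A m u"
proof -
  assume "finite A"
  have "card {w\<in>A. 0 < m u w} = (\<Sum>w\<in>{w\<in>A. 0 < m u w}. 1)" by simp
  also have "\<dots> \<le> (\<Sum>w\<in>{w\<in>A. 0 < m u w}. m u w)" by (rule sum_mono) simp
  also have "\<dots> \<le> (\<Sum>w\<in>A. m u w)" using \<open>finite A\<close> by (intro sum_mono2) auto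
  finally show ?thesis unfolding mdegree_def .
qed

lemma sum_le_square_if_card_le:
  fixes g :: "'a \<Rightarrow> real"
  assumes "card R \<le> k" "\<forall>u\<in>R. g u \<le> real k"
  shows "sum g R \<le> real k ^ 2"
proof -
  have "sum g R \<le> real (card R) * real k"
    using assms(2) sum_bounded_above[of R g "real k"] by simp
  also have "\<dots> \<le> real k ^ 2"
    using assms(1) by (simp add: power2_eq_square mult_right_mono)
  finally show ?thesis .
qed

text \<open>Pick a vertex v of maximal f among those with d v < f v; it and its at most d v neighbours
  contribute at most f v each, that is at most (f v)^2 together, and the rest is handled by induction.\<close>

lemma greedy_independent_set:
  fixes f d :: "'a \<Rightarrow> nat"
  assumes "finite A" "T \<subseteq> A" "\<forall>u v. m u v = m v u" "\<forall>v. m v v = 0"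
    and "\<forall>u\<in>T. card {w\<in>A. 0 < m u w} \<le> d u"
  shows "\<exists>I\<subseteq>T. independent_set m I \<and> (\<forall>u\<in>I. d u < f u) \<and>
    (\<Sum>u\<in>T. real (f u) - real (d u)) \<le> (\<Sum>u\<in>I. real (f u)^2)"
  using assms(2,5)
proof (induction "card T" arbitrary: T rule: less_induct)
  case less
  let ?c = "\<lambda>u. real (f u) - real (d u)"
  define T' where "T' = {u\<in>T. d u < f u}"
  have finT: "finite T" using finite_subset[OF less.prems(1) assms(1)] .
  show ?case
  proof (cases "T' = {}")
    case True
    then have "(\<Sum>u\<in>T. ?c u) \<le> 0"
      unfolding T'_def by (intro sum_nonpos) auto
    then show ?thesis unfolding independent_set_def by (intro exI[of _ "{}"]) auto
  next
    case False
    have "finite T'" using finT unfolding T'_def by simp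
    then have "Max (f ` T') \<in> f ` T'"
      using False by (intro Max_in) auto
    then obtain v where "v \<in> T'" "f v = Max (f ` T')" by auto
    with \<open>finite T'\<close> have "v \<in> T'" and v_max: "\<forall>u\<in>T'. f u \<le> f v" by auto
    then have v: "v \<in> T" "d v < f v" unfolding T'_def by auto
    define R where "R = insert v {u\<in>T. 0 < m v u}"
    have R: "R \<subseteq> T" "v \<in> R" "card (T - R) < card T"
      using v finT unfolding R_def by (auto intro: psubset_card_mono)
    obtain I where I: "I \<subseteq> T - R" "independent_set m I" "\<forall>u\<in>I. d u < f u"
      "(\<Sum>u\<in>T - R. ?c u) \<le> (\<Sum>u\<in>I. real (f u)^2)"
      using less.hyps[OF R(3)] less.prems by blast
    have "card {u\<in>T. 0 < m v u} \<le> card {u\<in>A. 0 < m v u}"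
      using less.prems(1) assms(1) by (intro card_mono) auto
    then have "card R \<le> Suc (card {u\<in>A. 0 < m v u})"
      unfolding R_def using finT by (simp add: card_insert_if)
    with v less.prems(2) have card_R: "card R \<le> f v" by force
    have "?c u \<le> real (f v)" if "u \<in> T" for u
      using that v_max unfolding T'_def by (cases "d u < f u") auto
    with R(1) card_R have "(\<Sum>u\<in>R. ?c u) \<le> real (f v)^2"
      by (intro sum_le_square_if_card_le) auto
    then have "(\<Sum>u\<in>T. ?c u) \<le> (\<Sum>u\<in>I. real (f u)^2) + real (f v)^2"
      using I(4) sum.subset_diff[OF R(1) finT, of ?c] by linarith
    also have "\<dots> = (\<Sum>u\<in>insert v I. real (f u)^2)"
      using I(1) R(2) finite_subset[OF I(1)] finT by (subst sum.insert) auto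
    finally have "(\<Sum>u\<in>T. ?c u) \<le> (\<Sum>u\<in>insert v I. real (f u)^2)" .
    moreover have "independent_set m (insert v I)"
      using I(1,2) assms(3,4) unfolding independent_set_def R_def by auto
    ultimately show ?thesis
      using I(1,3) R(1) v by (intro exI[of _ "insert v I"]) auto
  qed
qed

lemma mdegree_split:
  "finite V \<Longrightarrow> A \<subseteq> V \<Longrightarrow> mdegree V F u = mdegree A F u + mdegree (V - A) F u"
  unfolding mdegree_def by (metis add.commute sum.subset_diff)

lemma alternating_barrier_excess:
  assumes mg: "multigraph V m" and sp: "spanning_subgraph V m F"
    and barrier: "alternating_barrier V m f F S T"
  shows "1 + (\<Sum>w\<in>S. real (f w + 1)) \<le> (\<Sum>u\<in>T. real (f u) - real (mdegree (V - S) m u))"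
proof -
  have fin: "finite V" using mg unfolding multigraph_def by simp
  have F: "\<forall>u v. F u v = F v u" "\<forall>u v. F u v \<le> m u v"
    using sp unfolding spanning_subgraph_def multigraph_def by auto
  have ST: "S \<subseteq> V" "T \<subseteq> V" and sat: "\<forall>w\<in>S. f w + 1 \<le> mdegree V F w"
    and unsat: "\<forall>u\<in>T. mdegree V F u \<le> f u" and "\<exists>x\<in>T. mdegree V F x < f x"
    and T_closed: "\<forall>u\<in>T. \<forall>w. F u w < m u w \<longrightarrow> w \<in> S"
    and S_closed: "\<forall>w\<in>S. \<forall>z. 0 < F w z \<longrightarrow> z \<in> T"
    using barrier unfolding alternating_barrier_def by auto
  then obtain x where x: "x \<in> T" "mdegree V F x < f x" by blast
  have finT: "finite T" using finite_subset[OF ST(2) fin] .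
  \<comment> \<open>F-edges leave S only towards T, and at T all edges towards V - S belong to F\<close>
  have deg_S: "mdegree V F w = mdegree T F w" if "w \<in> S" for w
    using S_closed that unfolding mdegree_def by (intro sum.mono_neutral_right[OF fin ST(2)]) auto
  have deg_T: "mdegree V F u = mdegree S F u + mdegree (V - S) m u" if "u \<in> T" for u
  proof -
    have "F u w = m u w" if "w \<in> V - S" for w
      using T_closed \<open>u \<in> T\<close> that F(2) by (meson DiffD2 le_neq_implies_less)
    then have "mdegree (V - S) F u = mdegree (V - S) m u"
      unfolding mdegree_def by simp
    with mdegree_split[OF fin ST(1)] show ?thesis by simp
  qed
  have "(\<Sum>w\<in>S. real (f w + 1)) \<le> (\<Sum>w\<in>S. real (mdegree V F w))"
    using sat by (intro sum_mono) (simp only: of_nat_le_iff)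
  also have "\<dots> = (\<Sum>w\<in>S. \<Sum>u\<in>T. real (F w u))"
    using deg_S by (simp add: mdegree_def)
  also have "\<dots> = (\<Sum>u\<in>T. \<Sum>w\<in>S. real (F u w))"
    using F(1) by (subst sum.swap) simp
  also have "\<dots> = (\<Sum>u\<in>T. real (mdegree V F u) - real (mdegree (V - S) m u))"
    using deg_T by (simp add: mdegree_def)
  also have "\<dots> \<le> (\<Sum>u\<in>T. real (f u) - real (mdegree (V - S) m u)) - 1"
  proof -
    have "(\<Sum>u\<in>T - {x}. real (mdegree V F u)) \<le> (\<Sum>u\<in>T - {x}. real (f u))"
      using unsat by (intro sum_mono) simp
    with x have "(\<Sum>u\<in>T. real (mdegree V F u)) + 1 \<le> (\<Sum>u\<in>T. real (f u))"
      by (simp add: sum.remove[OF finT x(1)])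
    then show ?thesis by (simp add: sum_subtractf)
  qed
  finally show ?thesis by simp
qed

lemma iso_tough_independent_set:
  assumes mg: "multigraph V m" and tough: "iso_tough V m t" and t_nonneg: "\<forall>v. 0 \<le> t v"
    and "S \<subseteq> V" "I \<subseteq> V - S" "independent_set m I"
  shows "(\<Sum>v\<in>I. t v) \<le> real (card S) + (\<Sum>u\<in>I. real (mdegree (V - S) m u))"
proof -
  have fin: "finite V" using mg unfolding multigraph_def by simp
  have finI: "finite I" using assms(5) fin finite_subset by blast
  \<comment> \<open>deleting S together with the neighbours of I isolates every vertex of I\<close>
  define S' where "S' = S \<union> (\<Union>u\<in>I. {w\<in>V - S. 0 < m u w})"
  have "I \<subseteq> iso_vertices V m S'"
    using assms(5,6) unfolding iso_vertices_def S'_def independent_set_def by auto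
  then have "(\<Sum>v\<in>I. t v) \<le> (\<Sum>v\<in>iso_vertices V m S'. t v)"
    using fin t_nonneg by (intro sum_mono2) (auto simp: iso_vertices_def)
  also have "\<dots> \<le> real (card S')"
  proof -
    have "S' \<subseteq> V" using assms(4) unfolding S'_def by blast
    with tough show ?thesis unfolding iso_tough_def by blast
  qed
  also have "\<dots> \<le> real (card S) + (\<Sum>u\<in>I. real (mdegree (V - S) m u))"
  proof -
    have "card S' \<le> card S + card (\<Union>u\<in>I. {w\<in>V - S. 0 < m u w})"
      unfolding S'_def by (rule card_Un_le)
    also have "\<dots> \<le> card S + (\<Sum>u\<in>I. card {w\<in>V - S. 0 < m u w})"
      using card_UN_le[OF finI] by simp
    also have "\<dots> \<le> card S + (\<Sum>u\<in>I. mdegree (V - S) m u)"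
      using fin by (intro add_left_mono sum_mono card_neighbours_le_mdegree) simp
    finally show ?thesis
      by (metis of_nat_add of_nat_le_iff of_nat_sum)
  qed
  finally show ?thesis .
qed

lemma alternating_barrier_not_iso_tough:
  assumes mg: "multigraph V m" and sp: "spanning_subgraph V m F"
    and barrier: "alternating_barrier V m f F S T"
  shows "\<not> iso_tough V m (\<lambda>v. real (f v) * (real (f v) + 1))"
proof
  assume tough: "iso_tough V m (\<lambda>v. real (f v) * (real (f v) + 1))"
  have fin: "finite V" and symm: "\<forall>u v. m u v = m v u" and loopless: "\<forall>v. m v v = 0"
    using mg unfolding multigraph_def by auto
  have S: "S \<subseteq> V" and T: "T \<subseteq> V - S"
    using barrier unfolding alternating_barrier_def by auto
  have "card {w\<in>V - S. 0 < m u w} \<le> mdegree (V - S) m u" for u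
    using fin by (intro card_neighbours_le_mdegree) simp
  with greedy_independent_set[OF _ T symm loopless, of "mdegree (V - S) m" f] fin
  obtain I where I: "I \<subseteq> T" "independent_set m I" "\<forall>u\<in>I. mdegree (V - S) m u < f u"
    "(\<Sum>u\<in>T. real (f u) - real (mdegree (V - S) m u)) \<le> (\<Sum>u\<in>I. real (f u)^2)"
    by blast
  have "(\<Sum>v\<in>I. real (f v) * (real (f v) + 1)) \<le> real (card S) + (\<Sum>u\<in>I. real (mdegree (V - S) m u))"
    using iso_tough_independent_set[OF mg tough _ S _ I(2)] I(1) T by auto
  moreover have "(\<Sum>v\<in>I. real (f v) * (real (f v) + 1)) = (\<Sum>v\<in>I. real (f v)^2) + (\<Sum>v\<in>I. real (f v))"
    by (simp add: sum.distrib[symmetric] algebra_simps power2_eq_square)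
  moreover have "(\<Sum>u\<in>I. real (mdegree (V - S) m u)) \<le> (\<Sum>v\<in>I. real (f v))"
    using I(3) by (intro sum_mono) (simp add: less_imp_le)
  moreover have "real (card S) \<le> (\<Sum>w\<in>S. real (f w + 1))"
    using sum_mono[of S "\<lambda>_. 1::real" "\<lambda>w. real (f w + 1)"] by simp
  ultimately show False
    using alternating_barrier_excess[OF mg sp barrier] I(4) by linarith
qed

theorem mainTheorem12:
  fixes V :: "'a set" and m :: "'a \<Rightarrow> 'a \<Rightarrow> nat" and f :: "'a \<Rightarrow> nat"
  assumes "multigraph V m"
    and "iso_tough V m (\<lambda>v. real (f v) * (real (f v) + 1))"
  shows "\<exists>F. ff1_factor V m f F"
proof -
  obtain F where min: "min_deficiency_subgraph V m f F"
    using ex_min_deficiency_subgraph[OF assms(1)] by blast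
  then have bounded: "degree_bounded_subgraph V m f F" and sp: "spanning_subgraph V m F"
    unfolding min_deficiency_subgraph_def degree_bounded_subgraph_def by auto
  have fin: "finite V" using assms(1) unfolding multigraph_def by simp
  show ?thesis
  proof (cases "deficiency V f F = 0")
    case True
    then show ?thesis using ff1_factor_if_deficiency_zero[OF fin bounded] by blast
  next
    case False
    then obtain x where "x \<in> V" "f x - mdegree V F x \<noteq> 0"
      unfolding deficiency_def by (meson sum.neutral)
    then have "alternating_barrier V m f F (alt_reach m F x False) (insert x (alt_reach m F x True))"
      by (intro min_deficiency_alternating_barrier[OF assms(1) min]) auto
    then have "\<not> iso_tough V m (\<lambda>v. real (f v) * (real (f v) + 1))"
      by (rule alternating_barrier_not_iso_tough[OF assms(1) sp])
    with assms(2) show ?thesis by contradiction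
  qed
qed
end
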